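(* Let $M$ be a circulant $n\times n$ matrix over $\mathbb{Z}_4+u\mathbb{Z}_4$. Then the matrix $[I_n\,|\,M]$ generates a formally self-dual code over $\mathbb{Z}_4+u\mathbb{Z}_4$ (of length $2n$).
   Context: $\mathbb{Z}_4+u\mathbb{Z}_4$ is the commutative ring of characteristic $4$ with $u^2=0$. A linear code of length $N$ is a submodule of $(\mathbb{Z}_4+u\mathbb{Z}_4)^N$; its dual is taken with respect to the Euclidean inner product $\sum_i x_iy_i$ in the ring. The Lee weight on $\mathbb{Z}_4+u\mathbb{Z}_4$ is $w_L(a+ub)=w_L(b)+w_L(a+b)$, where the Lee weight on $\mathbb{Z}_4$ is $0,1,2,1$ for $0,1,2,3$, extended additively to vectors. A linear code is formally self-dual if it has the same Lee weight enumerator as its dual. A circulant matrix is one in which each row is the cyclic shift by one position to the right of the previous row. *)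

theory Defs
  imports Main "HOL-Library.Numeral_Type"
begin

text \<open>An element ZU a b represents a + u b with a, b in Z4.\<close>
datatype zu4 = ZU "4" "4"

fun zu_re :: "zu4 \<Rightarrow> 4" where "zu_re (ZU a b) = a"
fun zu_im :: "zu4 \<Rightarrow> 4" where "zu_im (ZU a b) = b"

lemma zu4_eq_iff: "x = y \<longleftrightarrow> zu_re x = zu_re y \<and> zu_im x = zu_im y"
  by (cases x; cases y) auto

instantiation zu4 :: comm_ring_1
begin
definition "0 = ZU 0 0"
definition "1 = ZU 1 0"
definition "x + y = ZU (zu_re x + zu_re y) (zu_im x + zu_im y)"
definition "x - y = ZU (zu_re x - zu_re y) (zu_im x - zu_im y)"
definition "- x = ZU (- zu_re x) (- zu_im x)"
definition "x * y = ZU (zu_re x * zu_re y) (zu_re x * zu_im y + zu_im x * zu_re y)"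
instance
  by standard (simp_all add: zu4_eq_iff zero_zu4_def one_zu4_def plus_zu4_def
      minus_zu4_def uminus_zu4_def times_zu4_def algebra_simps)
end

definition u_elt :: zu4 where "u_elt = ZU 0 1"

definition lee_z4 :: "4 \<Rightarrow> nat" where
  "lee_z4 x = (if x = 0 then 0 else if x = 2 then 2 else 1)"

definition lee_zu :: "zu4 \<Rightarrow> nat" where
  "lee_zu x = lee_z4 (zu_im x) + lee_z4 (zu_re x + zu_im x)"

text \<open>Vectors of length N are functions nat => zu4 vanishing outside {..<N}.\<close>
definition vecs :: "nat \<Rightarrow> (nat \<Rightarrow> zu4) set" where
  "vecs N = {v. \<forall>i\<ge>N. v i = 0}"

definition lee_weight :: "nat \<Rightarrow> (nat \<Rightarrow> zu4) \<Rightarrow> nat" where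
  "lee_weight N v = (\<Sum>i<N. lee_zu (v i))"

text \<open>Lee weight enumerator, represented by its coefficient sequence (weight distribution).\<close>
definition lee_weight_enum :: "nat \<Rightarrow> (nat \<Rightarrow> zu4) set \<Rightarrow> nat \<Rightarrow> nat" where
  "lee_weight_enum N C w = card {c \<in> C. lee_weight N c = w}"

definition inner :: "nat \<Rightarrow> (nat \<Rightarrow> zu4) \<Rightarrow> (nat \<Rightarrow> zu4) \<Rightarrow> zu4" where
  "inner N x y = (\<Sum>i<N. x i * y i)"

definition dual_code :: "nat \<Rightarrow> (nat \<Rightarrow> zu4) set \<Rightarrow> (nat \<Rightarrow> zu4) set" where
  "dual_code N C = {y \<in> vecs N. \<forall>x\<in>C. inner N x y = 0}"

definition linear_code :: "nat \<Rightarrow> (nat \<Rightarrow> zu4) set \<Rightarrow> bool" where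
  "linear_code N C \<longleftrightarrow> C \<subseteq> vecs N \<and> (\<lambda>i. 0) \<in> C \<and>
     (\<forall>x\<in>C. \<forall>y\<in>C. (\<lambda>i. x i + y i) \<in> C) \<and> (\<forall>r. \<forall>x\<in>C. (\<lambda>i. r * x i) \<in> C)"

definition formally_self_dual :: "nat \<Rightarrow> (nat \<Rightarrow> zu4) set \<Rightarrow> bool" where
  "formally_self_dual N C \<longleftrightarrow> linear_code N C \<and>
     lee_weight_enum N C = lee_weight_enum N (dual_code N C)"

definition generated_code :: "nat \<Rightarrow> nat \<Rightarrow> (nat \<Rightarrow> nat \<Rightarrow> zu4) \<Rightarrow> (nat \<Rightarrow> zu4) set" where
  "generated_code k N G =
     {v. \<exists>a::nat \<Rightarrow> zu4. v = (\<lambda>j. if j < N then (\<Sum>i<k. a i * G i j) else 0)}"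

definition circulant :: "nat \<Rightarrow> (nat \<Rightarrow> nat \<Rightarrow> zu4) \<Rightarrow> bool" where
  "circulant n M \<longleftrightarrow> (\<forall>i j. Suc i < n \<and> j < n \<longrightarrow> M (Suc i) ((j + 1) mod n) = M i j)"

definition id_aug :: "nat \<Rightarrow> (nat \<Rightarrow> nat \<Rightarrow> zu4) \<Rightarrow> nat \<Rightarrow> nat \<Rightarrow> zu4" where
  "id_aug n M i j = (if j < n then (if i = j then 1 else 0) else M i (j - n))"

end

theory Submission
  imports Defs
begin

text \<open>
  The code generated by [I | M] is C = {(x, xM)}, and its dual is
  D = {(y1, y2) : y1 + M y2 = 0}.  Let P be the reversal permutation
  k \<mapsto> -k (mod n).  A circulant M satisfies M^T = P M P, and this makes
  (y1, y2) \<mapsto> (P y2, -P y1) a bijection from D onto C.  It only permutes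
  coordinates and negates some of them, and negation preserves the Lee weight,
  so C and D have the same Lee weight distribution.
\<close>

lemma sum_lessThan_double:
  fixes f :: "nat \<Rightarrow> 'a::comm_monoid_add"
  shows "(\<Sum>k<2*n. f k) = (\<Sum>k<n. f k) + (\<Sum>j<n. f (n + j))"
proof -
  have "(\<Sum>k<2*n. f k) = sum f {0..<n} + sum f {n..<2*n}"
    using sum.atLeastLessThan_concat[of 0 n "2*n" f] by (simp add: lessThan_atLeast0)
  moreover have "sum f {0+n..<n+n} = (\<Sum>j=0..<n. f (j + n))"
    by (rule sum.shift_bounds_nat_ivl)
  ultimately show ?thesis by (simp add: mult_2 lessThan_atLeast0 add.commute)
qed

lemma lee_z4_uminus: "lee_z4 (- z) = lee_z4 z"
proof -
  have "- (2::4) = 2" by simp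
  then have "- z = 2 \<longleftrightarrow> z = 2" by (metis minus_minus)
  then show ?thesis unfolding lee_z4_def by (simp add: neg_equal_0_iff_equal)
qed

lemma lee_zu_uminus: "lee_zu (- x) = lee_zu x"
proof -
  have "zu_re (- x) + zu_im (- x) = - (zu_re x + zu_im x)" "zu_im (- x) = - zu_im x"
    by (simp_all add: uminus_zu4_def)
  then show ?thesis unfolding lee_zu_def by (metis lee_z4_uminus)
qed

lemma lee_weight_enum_eq_if_bij_betw:
  assumes "bij_betw f D C" and "\<And>d. d \<in> D \<Longrightarrow> lee_weight N (f d) = lee_weight N d"
  shows "lee_weight_enum N C = lee_weight_enum N D"
proof
  fix w
  have "bij_betw f {d \<in> D. lee_weight N d = w} {c \<in> C. lee_weight N c = w}"
    using assms unfolding bij_betw_def inj_on_def by auto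
  then show "lee_weight_enum N C w = lee_weight_enum N D w"
    unfolding lee_weight_enum_def by (simp add: bij_betw_same_card)
qed

lemma mem_generated_code_id_aug_iff:
  "v \<in> generated_code n (2*n) (id_aug n M) \<longleftrightarrow>
     v \<in> vecs (2*n) \<and> (\<forall>j<n. v (n + j) = (\<Sum>i<n. v i * M i j))"
  (is "_ \<longleftrightarrow> ?rhs")
proof -
  have row_comb: "(\<Sum>i<n. a i * id_aug n M i j) = (if j < n then a j else \<Sum>i<n. a i * M i (j - n))"
    for a j by (simp add: id_aug_def if_distrib[of "(*) _"] sum.delta cong: if_cong)
  show ?thesis
  proof
    assume "v \<in> generated_code n (2*n) (id_aug n M)"
    then obtain a where "v = (\<lambda>j. if j < 2*n then \<Sum>i<n. a i * id_aug n M i j else 0)"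
      unfolding generated_code_def by blast
    then show ?rhs by (simp add: row_comb vecs_def)
  next
    assume ?rhs
    have "v j = (\<Sum>i<n. v i * M i (j - n))" if "n \<le> j" "j < 2*n" for j
    proof -
      have "j = n + (j - n)" and "j - n < n" using that by auto
      then show ?thesis using \<open>?rhs\<close> by metis
    qed
    with \<open>?rhs\<close> have "v = (\<lambda>j. if j < 2*n then \<Sum>i<n. v i * id_aug n M i j else 0)"
      by (auto simp: row_comb vecs_def fun_eq_iff)
    then show "v \<in> generated_code n (2*n) (id_aug n M)"
      unfolding generated_code_def by blast
  qed
qed

lemma linear_code_id_aug: "linear_code (2*n) (generated_code n (2*n) (id_aug n M))"
  unfolding linear_code_def subset_eq Ball_def mem_generated_code_id_aug_iff
  by (auto simp: vecs_def distrib_right sum.distrib sum_distrib_left mult.assoc)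

lemma inner_generated_code_id_aug:
  assumes "x \<in> generated_code n (2*n) (id_aug n M)"
  shows "inner (2*n) x y = (\<Sum>i<n. x i * (y i + (\<Sum>j<n. M i j * y (n + j))))"
proof -
  have "(\<Sum>j<n. x (n + j) * y (n + j)) = (\<Sum>j<n. \<Sum>i<n. x i * M i j * y (n + j))"
    using assms by (simp add: mem_generated_code_id_aug_iff sum_distrib_right)
  also have "\<dots> = (\<Sum>i<n. x i * (\<Sum>j<n. M i j * y (n + j)))"
    by (subst sum.swap) (simp add: sum_distrib_left mult.assoc)
  finally show ?thesis
    unfolding inner_def sum_lessThan_double by (simp add: distrib_left sum.distrib)
qed

lemma mem_dual_code_id_aug_iff:
  "y \<in> dual_code (2*n) (generated_code n (2*n) (id_aug n M)) \<longleftrightarrow>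
     y \<in> vecs (2*n) \<and> (\<forall>i<n. y i + (\<Sum>j<n. M i j * y (n + j)) = 0)"
proof (intro iffI conjI allI impI)
  fix i assume i: "i < n" and y: "y \<in> dual_code (2*n) (generated_code n (2*n) (id_aug n M))"
  define row where
    "row = (\<lambda>k. if k < n then (if k = i then 1 else 0) else if k < 2*n then M i (k - n) else 0)"
  have "row \<in> generated_code n (2*n) (id_aug n M)"
    unfolding mem_generated_code_id_aug_iff using i
    by (simp add: row_def vecs_def if_distrib[of "\<lambda>x. x * _"] sum.delta cong: if_cong)
  then have "inner (2*n) row y = 0" and "inner (2*n) row y = y i + (\<Sum>j<n. M i j * y (n + j))"
    using y i by (auto simp: dual_code_def inner_generated_code_id_aug row_def
        if_distrib[of "\<lambda>x. x * _"] sum.delta cong: if_cong)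
  then show "y i + (\<Sum>j<n. M i j * y (n + j)) = 0" by simp
qed (auto simp: dual_code_def inner_generated_code_id_aug)

definition neg_mod :: "nat \<Rightarrow> nat \<Rightarrow> nat" where
  "neg_mod n k = (if k = 0 then 0 else n - k)"

lemma neg_mod_less: "k < n \<Longrightarrow> neg_mod n k < n"
  by (auto simp: neg_mod_def)

lemma neg_mod_neg_mod: "k < n \<Longrightarrow> neg_mod n (neg_mod n k) = k"
  by (auto simp: neg_mod_def)

lemma sum_neg_mod_swap: "(\<Sum>k<n. f k (neg_mod n k)) = (\<Sum>k<n. f (neg_mod n k) k)"
  by (rule sum.reindex_bij_witness[where i="neg_mod n" and j="neg_mod n"])
    (auto simp: neg_mod_less neg_mod_neg_mod)

lemma circulant_shift:
  assumes "circulant n M" and "i < n"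
  shows "M i ((i + k) mod n) = M 0 (k mod n)"
  using assms(2)
proof (induction i)
  case (Suc i)
  have "(Suc i + k) mod n = ((i + k) mod n + 1) mod n"
    by (simp add: mod_Suc_eq)
  then have "M (Suc i) ((Suc i + k) mod n) = M i ((i + k) mod n)"
    using assms(1) Suc.prems unfolding circulant_def by simp
  then show ?case using Suc by simp
qed simp

lemma circulant_entry:
  assumes "circulant n M" and "i < n" and "j < n"
  shows "M i j = M 0 ((j + n - i) mod n)"
  using circulant_shift[OF assms(1,2), of "j + n - i"] assms(2,3) by simp

text \<open>Entrywise form of M^T = P M P for the reversal permutation P.\<close>
lemma circulant_neg_mod_swap:
  assumes "circulant n M" and "j < n" and "k < n"
  shows "M (neg_mod n k) j = M (neg_mod n j) k"
proof -
  have "(j + n - neg_mod n k) mod n = (k + n - neg_mod n j) mod n"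
    using assms(2,3) by (auto simp: neg_mod_def add.commute)
  then show ?thesis
    using circulant_entry[OF assms(1)] neg_mod_less assms(2,3) by metis
qed

definition dual_to_code :: "nat \<Rightarrow> (nat \<Rightarrow> zu4) \<Rightarrow> nat \<Rightarrow> zu4" where
  "dual_to_code n y = (\<lambda>k. if k < n then y (n + neg_mod n k)
     else if k < 2*n then - y (neg_mod n (k - n)) else 0)"

definition code_to_dual :: "nat \<Rightarrow> (nat \<Rightarrow> zu4) \<Rightarrow> nat \<Rightarrow> zu4" where
  "code_to_dual n v = (\<lambda>k. if k < n then - v (n + neg_mod n k)
     else if k < 2*n then v (neg_mod n (k - n)) else 0)"

lemma code_to_dual_dual_to_code: "y \<in> vecs (2*n) \<Longrightarrow> code_to_dual n (dual_to_code n y) = y"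
  by (auto simp: fun_eq_iff code_to_dual_def dual_to_code_def vecs_def neg_mod_less neg_mod_neg_mod)

lemma dual_to_code_code_to_dual: "v \<in> vecs (2*n) \<Longrightarrow> dual_to_code n (code_to_dual n v) = v"
  by (auto simp: fun_eq_iff code_to_dual_def dual_to_code_def vecs_def neg_mod_less neg_mod_neg_mod)

lemma lee_weight_dual_to_code: "lee_weight (2*n) (dual_to_code n y) = lee_weight (2*n) y"
proof -
  have "lee_weight (2*n) (dual_to_code n y)
      = (\<Sum>k<n. lee_zu (y (n + neg_mod n k))) + (\<Sum>j<n. lee_zu (y (neg_mod n j)))"
    unfolding lee_weight_def sum_lessThan_double by (simp add: dual_to_code_def lee_zu_uminus)
  also have "\<dots> = lee_weight (2*n) y"
    unfolding lee_weight_def sum_lessThan_double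
    using sum_neg_mod_swap[of "\<lambda>_ k. lee_zu (y (n + k))" n] sum_neg_mod_swap[of "\<lambda>_ k. lee_zu (y k)" n]
    by (simp add: add.commute)
  finally show ?thesis .
qed

lemma dual_to_code_mem_code:
  assumes "circulant n M"
    and "y \<in> dual_code (2*n) (generated_code n (2*n) (id_aug n M))"
  shows "dual_to_code n y \<in> generated_code n (2*n) (id_aug n M)"
  unfolding mem_generated_code_id_aug_iff
proof (intro conjI allI impI)
  fix j assume j: "j < n"
  have dual: "y (neg_mod n j) + (\<Sum>l<n. M (neg_mod n j) l * y (n + l)) = 0"
    using assms(2) neg_mod_less[OF j] by (simp add: mem_dual_code_id_aug_iff)
  have "dual_to_code n y (n + j) = (\<Sum>l<n. M (neg_mod n j) l * y (n + l))"
    using j dual by (simp add: dual_to_code_def add_eq_0_iff)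
  also have "\<dots> = (\<Sum>l<n. y (n + l) * M (neg_mod n l) j)"
    by (rule sum.cong) (simp_all add: circulant_neg_mod_swap[OF assms(1) j] mult.commute)
  also have "\<dots> = (\<Sum>i<n. y (n + neg_mod n i) * M i j)"
    by (rule sum_neg_mod_swap[of "\<lambda>l i. y (n + l) * M i j"])
  also have "\<dots> = (\<Sum>i<n. dual_to_code n y i * M i j)"
    by (simp add: dual_to_code_def)
  finally show "dual_to_code n y (n + j) = (\<Sum>i<n. dual_to_code n y i * M i j)" .
qed (simp add: vecs_def dual_to_code_def)

lemma code_to_dual_mem_dual:
  assumes "circulant n M"
    and "v \<in> generated_code n (2*n) (id_aug n M)"
  shows "code_to_dual n v \<in> dual_code (2*n) (generated_code n (2*n) (id_aug n M))"
  unfolding mem_dual_code_id_aug_iff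
proof (intro conjI allI impI)
  fix i assume i: "i < n"
  have "(\<Sum>j<n. M i j * code_to_dual n v (n + j)) = (\<Sum>j<n. M i j * v (neg_mod n j))"
    by (simp add: code_to_dual_def)
  also have "\<dots> = (\<Sum>l<n. M i (neg_mod n l) * v l)"
    by (rule sum_neg_mod_swap[of "\<lambda>j l. M i j * v l"])
  also have "\<dots> = (\<Sum>l<n. v l * M l (neg_mod n i))"
  proof (rule sum.cong)
    fix l assume "l \<in> {..<n}"
    then have l: "l < n" by simp
    have "M (neg_mod n (neg_mod n i)) (neg_mod n l) = M (neg_mod n (neg_mod n l)) (neg_mod n i)"
      using circulant_neg_mod_swap[OF assms(1) neg_mod_less[OF l] neg_mod_less[OF i]] .
    then show "M i (neg_mod n l) * v l = v l * M l (neg_mod n i)"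
      using i l by (simp add: neg_mod_neg_mod mult.commute)
  qed simp
  also have "\<dots> = v (n + neg_mod n i)"
    using assms(2) neg_mod_less[OF i] by (simp add: mem_generated_code_id_aug_iff)
  finally show "code_to_dual n v i + (\<Sum>j<n. M i j * code_to_dual n v (n + j)) = 0"
    using i by (simp add: code_to_dual_def)
qed (simp add: vecs_def code_to_dual_def)

lemma bij_betw_dual_to_code:
  assumes "circulant n M"
  shows "bij_betw (dual_to_code n)
           (dual_code (2*n) (generated_code n (2*n) (id_aug n M)))
           (generated_code n (2*n) (id_aug n M))"
proof (rule bij_betw_byWitness[where f'="code_to_dual n"])
  show "\<forall>y \<in> dual_code (2*n) (generated_code n (2*n) (id_aug n M)).
          code_to_dual n (dual_to_code n y) = y"
    by (simp add: dual_code_def code_to_dual_dual_to_code)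
  show "\<forall>v \<in> generated_code n (2*n) (id_aug n M). dual_to_code n (code_to_dual n v) = v"
    by (simp add: mem_generated_code_id_aug_iff dual_to_code_code_to_dual)
qed (use dual_to_code_mem_code[OF assms] code_to_dual_mem_dual[OF assms] in blast)+

theorem theorem5p2:
  fixes n :: nat and M :: "nat \<Rightarrow> nat \<Rightarrow> zu4"
  assumes "circulant n M"
  shows "formally_self_dual (2 * n) (generated_code n (2 * n) (id_aug n M))"
  unfolding formally_self_dual_def
  using linear_code_id_aug lee_weight_enum_eq_if_bij_betw[OF bij_betw_dual_to_code[OF assms]]
    lee_weight_dual_to_code
  by blast

end
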